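(* Let $L\in(\Sigma^4_{2,8})^\star$, $L\neq0$, and let $F=\langle L,q(a,b,c)^4\rangle\in\mathbb{R}[a,b,c]_4$. Then $F$ does not vanish at any real point $\xi=(\xi_1:\xi_2:\xi_3)\in\mathbb{P}^2(\mathbb{R})$ whose associated binary quadratic form $\xi_1x^2+\xi_2xy+\xi_3y^2$ is (positive or negative) definite.
   Context: Apolarity pairing on $\mathbb{R}[x,y]$: $\langle x^{\alpha_1}y^{\alpha_2},x^{\beta_1}y^{\beta_2}\rangle=\frac{\beta_1!\beta_2!}{\alpha_1!\alpha_2!}x^{\beta_1-\alpha_1}y^{\beta_2-\alpha_2}$ if $\alpha_i\le\beta_i$, and $0$ otherwise, extended bilinearly; for $L,f\in\mathbb{R}[x,y]_8$ this is a real number. $\Sigma^4_{2,8}\subset\mathbb{R}[x,y]_8$ is the cone of finite sums of fourth powers of real binary quadratic forms and $(\Sigma^4_{2,8})^\star=\{L\in\mathbb{R}[x,y]_8:\langle L,q^4\rangle\ge0\ \forall q\in\mathbb{R}[x,y]_2\}$. With variables $a,b,c$, $q(a,b,c)=ax^2+bxy+cy^2$ and $\langle L,q(a,b,c)^4\rangle\in\mathbb{R}[a,b,c]_4$ is computed in $x,y$ treating $a,b,c$ as scalars. *)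

theory Defs
  imports "HOL-Computational_Algebra.Polynomial"
begin

text \<open>A binary octic form L in R[x,y]_8 is represented by its coefficient
  function L :: nat => real, where L i is the coefficient of x^i y^(8-i),
  i = 0..8 (values at i > 8 are ignored).\<close>

definition nonzero_form8 :: "(nat \<Rightarrow> real) \<Rightarrow> bool" where
  "nonzero_form8 L \<longleftrightarrow> (\<exists>i\<le>8. L i \<noteq> 0)"

text \<open>Apolarity pairing on R[x,y]_8, extended bilinearly from monomials:
  the pairing of x^i y^(8-i) with x^j y^(8-j) is
  j!(8-j)!/(i!(8-i)!) x^(j-i) y^((8-j)-(8-i)) if i <= j and 8-i <= 8-j, else 0;
  in degree 8 the remaining monomial is x^0 y^0 = 1.\<close>

definition apolar8 :: "(nat \<Rightarrow> real) \<Rightarrow> (nat \<Rightarrow> real) \<Rightarrow> real" where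
  "apolar8 L f = (\<Sum>i\<le>8. \<Sum>j\<le>8. L i * f j *
      (if i \<le> j \<and> 8 - i \<le> 8 - j
       then (fact j * fact (8 - j)) / (fact i * fact (8 - i)) else 0))"

text \<open>Coefficients of q(a,b,c)^4 = (a x^2 + b x y + c y^2)^4: the coefficient of
  x^m y^(8-m) is the coefficient of x^m in the dehomogenisation (c + b x + a x^2)^4.\<close>

definition qpow4 :: "real \<Rightarrow> real \<Rightarrow> real \<Rightarrow> nat \<Rightarrow> real" where
  "qpow4 a b c = coeff ([:c, b, a:] ^ 4)"

definition dual_Sigma4_28 :: "(nat \<Rightarrow> real) \<Rightarrow> bool" where
  "dual_Sigma4_28 L \<longleftrightarrow> (\<forall>a b c. apolar8 L (qpow4 a b c) \<ge> 0)"

definition Fpair :: "(nat \<Rightarrow> real) \<Rightarrow> real \<Rightarrow> real \<Rightarrow> real \<Rightarrow> real" where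
  "Fpair L a b c = apolar8 L (qpow4 a b c)"

definition definite_bqf :: "real \<Rightarrow> real \<Rightarrow> real \<Rightarrow> bool" where
  "definite_bqf a b c \<longleftrightarrow>
     (\<forall>x y. (x, y) \<noteq> (0, 0) \<longrightarrow> a * x^2 + b * x * y + c * y^2 > 0) \<or>
     (\<forall>x y. (x, y) \<noteq> (0, 0) \<longrightarrow> a * x^2 + b * x * y + c * y^2 < 0)"

end

theory Submission imports Defs begin

text \<open>Dehomogenise y = 1, so binary forms of degree at most 8 become univariate
  polynomials and linear forms become polynomials of degree at most 1.  In degree 8 the
  apolarity pairing is diagonal, so L acts as the linear functional p \<mapsto> \<Sum> L i p_i, and
  L lies in the dual cone iff this functional is nonnegative on fourth powers of quadratics.
  Write a definite form (up to sign) as q = U^2 + V^2 with U, V independent linear forms.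
  If \<langle>L, q^4\<rangle> = 0, a quadrature formula expresses 1260 q^4 as a positive combination of
  eighth powers of linear forms including U, V and U + V, so L kills these eighth powers.
  Since l^8 = (l^2)^4 is then a zero of the nonnegative function m \<mapsto> \<langle>L, m^4\<rangle>, its gradient
  vanishes there: \<langle>L, l^6 m\<rangle> = 0 for every quadratic m.  Applied to U, V and U + V this
  kills every monomial U^k V^(8-k); these span all octics, so L = 0.\<close>

definition apolar :: "(nat \<Rightarrow> real) \<Rightarrow> real poly \<Rightarrow> real" where
  "apolar L p = (\<Sum>i\<le>8. L i * coeff p i)"

lemma apolar8_diagonal: "apolar8 L f = (\<Sum>i\<le>8. L i * f i)"
proof -
  have "(i \<le> j \<and> 8 - i \<le> 8 - j) \<longleftrightarrow> j = i" if "i \<le> 8" "j \<le> 8" for i j :: nat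
    using that by linarith
  then show ?thesis
    unfolding apolar8_def by (intro sum.cong refl) (simp add: if_distrib cong: if_cong)
qed

lemma Fpair_eq_apolar: "Fpair L a b c = apolar L ([:c, b, a:] ^ 4)"
  by (simp add: Fpair_def apolar8_diagonal apolar_def qpow4_def)

lemma apolar_add: "apolar L (p + q) = apolar L p + apolar L q"
  by (simp add: apolar_def algebra_simps sum.distrib)

lemma apolar_smult: "apolar L (smult c p) = c * apolar L p"
  by (simp add: apolar_def algebra_simps sum_distrib_left)

lemma apolar_const_mult: "apolar L ([:c:] * p) = c * apolar L p"
  by (simp add: apolar_smult)

lemma apolar_numeral_mult: "apolar L (numeral n * p) = numeral n * apolar L p"
  by (simp only: numeral_mult_conv_smult apolar_smult)

lemma apolar_const_power_mult: "apolar L ([:c:] ^ k * p) = c ^ k * apolar L p"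
  by (simp add: poly_const_pow apolar_smult)

lemma apolar_sum: "apolar L (sum f A) = (\<Sum>x\<in>A. apolar L (f x))"
  by (simp add: apolar_def coeff_sum sum_distrib_left sum.swap[of _ A])

lemma apolar_monom_power:
  assumes "j \<le> 8"
  shows "apolar L ([:0, 1:] ^ j) = L j"
proof -
  have "apolar L ([:0, 1:] ^ j) = (\<Sum>i\<le>8. if i = j then L i else 0)"
    unfolding apolar_def monom_altdef[of 1 j, simplified, symmetric]
    by (intro sum.cong) (auto simp: coeff_monom)
  then show ?thesis using assms by simp
qed

lemma quadratic_poly_eq_pCons:
  "degree (q :: 'a::zero poly) \<le> 2 \<Longrightarrow> q = [:coeff q 0, coeff q 1, coeff q 2:]"
  by (rule poly_eqI)
    (auto simp: coeff_pCons numeral_2_eq_2 coeff_eq_0 split: nat.split)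

lemma dual_Sigma4_28_apolar_nonneg:
  assumes "dual_Sigma4_28 L" "degree q \<le> 2"
  shows "apolar L (q ^ 4) \<ge> 0"
proof -
  have "apolar L (q ^ 4) = Fpair L (coeff q 2) (coeff q 1) (coeff q 0)"
    using quadratic_poly_eq_pCons[OF assms(2)] by (simp add: Fpair_eq_apolar)
  then show ?thesis using assms(1) by (simp add: dual_Sigma4_28_def Fpair_def)
qed

lemma nonneg_quartic_linear_coeff_eq_0:
  fixes \<alpha> \<beta> \<gamma> \<delta> :: real
  assumes "\<forall>t. \<alpha> * t + \<beta> * t ^ 2 + \<gamma> * t ^ 3 + \<delta> * t ^ 4 \<ge> 0"
  shows "\<alpha> = 0"
proof (rule DERIV_local_min[where d = 1])
  show "((\<lambda>t. \<alpha> * t + \<beta> * t ^ 2 + \<gamma> * t ^ 3 + \<delta> * t ^ 4) has_real_derivative \<alpha>) (at 0)"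
    by (auto intro!: derivative_eq_intros)
qed (use assms in auto)

lemma apolar_pow6_mult_eq_0:
  assumes dual: "dual_Sigma4_28 L" and l: "degree l \<le> 1" and m: "degree m \<le> 2"
    and zero: "apolar L (l ^ 8) = 0"
  shows "apolar L (l ^ 6 * m) = 0"
proof -
  have expand: "(l\<^sup>2 + T * m) ^ 4 = l ^ 8 + 4 * (T * (l ^ 6 * m)) + 6 * (T\<^sup>2 * (l ^ 4 * m\<^sup>2))
      + 4 * (T ^ 3 * (l\<^sup>2 * m ^ 3)) + T ^ 4 * m ^ 4" for T :: "real poly"
    by algebra
  have "0 \<le> 4 * apolar L (l ^ 6 * m) * t + 6 * apolar L (l ^ 4 * m\<^sup>2) * t\<^sup>2
      + 4 * apolar L (l\<^sup>2 * m ^ 3) * t ^ 3 + apolar L (m ^ 4) * t ^ 4" for t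
  proof -
    have "degree (l\<^sup>2) \<le> 2" using l degree_power_le[of l 2] by linarith
    moreover have "degree ([:t:] * m) \<le> 2" using m degree_mult_le[of "[:t:]" m] by simp
    ultimately have "degree (l\<^sup>2 + [:t:] * m) \<le> 2" using degree_add_le by blast
    from dual_Sigma4_28_apolar_nonneg[OF dual this] show ?thesis
      unfolding expand
      by (simp only: apolar_add apolar_numeral_mult apolar_const_power_mult apolar_const_mult zero)
        (simp add: algebra_simps)
  qed
  from nonneg_quartic_linear_coeff_eq_0[OF allI[OF this]] show ?thesis by simp
qed

lemma sum_squares_pow4_quadrature:
  fixes u v :: "'a::idom"
  shows "1260 * (u\<^sup>2 + v\<^sup>2) ^ 4 = 702 * (u ^ 8 + v ^ 8) + 22 * ((u + v) ^ 8 + (u - v) ^ 8)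
    + ((u + 2 * v) ^ 8 + (u - 2 * v) ^ 8 + (2 * u + v) ^ 8 + (2 * u - v) ^ 8)"
  by algebra

lemma apolar_eighth_powers_eq_0:
  assumes dual: "dual_Sigma4_28 L" and U: "degree U \<le> 1" and V: "degree V \<le> 1"
    and zero: "apolar L ((U\<^sup>2 + V\<^sup>2) ^ 4) = 0"
  shows "apolar L (U ^ 8) = 0" "apolar L (V ^ 8) = 0" "apolar L ((U + V) ^ 8) = 0"
proof -
  have nonneg: "apolar L (l ^ 8) \<ge> 0" if "degree l \<le> 1" for l
  proof -
    have "degree (l\<^sup>2) \<le> 2" using that degree_power_le[of l 2] by linarith
    from dual_Sigma4_28_apolar_nonneg[OF dual this] show ?thesis
      by (simp add: power_mult[symmetric])
  qed
  have linear: "degree (p + q) \<le> 1" "degree (p - q) \<le> 1" "degree (2 * p + q) \<le> 1"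
    "degree (p + 2 * q) \<le> 1" "degree (2 * p - q) \<le> 1" "degree (p - 2 * q) \<le> 1"
    if "degree p \<le> 1" "degree q \<le> 1" for p q :: "real poly"
    using that by (auto intro!: degree_add_le degree_diff_le simp: numeral_mult_conv_smult)
  have "0 = apolar L (1260 * (U\<^sup>2 + V\<^sup>2) ^ 4)" using zero by (simp add: apolar_numeral_mult)
  also have "\<dots> = 702 * apolar L (U ^ 8) + 702 * apolar L (V ^ 8)
     + 22 * apolar L ((U + V) ^ 8) + 22 * apolar L ((U - V) ^ 8)
     + apolar L ((U + 2 * V) ^ 8) + apolar L ((U - 2 * V) ^ 8)
     + apolar L ((2 * U + V) ^ 8) + apolar L ((2 * U - V) ^ 8)"
    unfolding sum_squares_pow4_quadrature
    by (simp only: apolar_add apolar_numeral_mult) (simp add: algebra_simps)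
  finally show "apolar L (U ^ 8) = 0" "apolar L (V ^ 8) = 0" "apolar L ((U + V) ^ 8) = 0"
    using nonneg[OF U] nonneg[OF V] linear[OF U V, THEN nonneg] by linarith+
qed

lemma apolar_mixed_monomials_eq_0:
  assumes dual: "dual_Sigma4_28 L" and U: "degree U \<le> 1" and V: "degree V \<le> 1"
    and zero: "apolar L (U ^ 8) = 0" "apolar L (V ^ 8) = 0" "apolar L ((U + V) ^ 8) = 0"
    and k: "k \<le> 8"
  shows "apolar L (U ^ k * V ^ (8 - k)) = 0"
proof -
  define e where "e k = apolar L (U ^ k * V ^ (8 - k))" for k
  have quadratic: "degree (U\<^sup>2) \<le> 2" "degree (U * V) \<le> 2" "degree (V\<^sup>2) \<le> 2"
    using U V degree_power_le[of U 2] degree_power_le[of V 2] degree_mult_le[of U V] by linarith+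
  have UV: "degree (U + V) \<le> 1" using U V by (simp add: degree_add_le)
  have grad: "apolar L (l ^ 6 * m) = 0" if "l \<in> {U, V, U + V}" "m \<in> {U\<^sup>2, U * V, V\<^sup>2}" for l m
    using that U V UV quadratic zero by (auto intro: apolar_pow6_mult_eq_0[OF dual])
  have outer: "e 8 = 0" "e 7 = 0" "e 6 = 0" "e 2 = 0" "e 1 = 0" "e 0 = 0"
    using grad[of U "U\<^sup>2"] grad[of U "U * V"] grad[of U "V\<^sup>2"]
      grad[of V "U\<^sup>2"] grad[of V "U * V"] grad[of V "V\<^sup>2"]
    by (simp_all add: e_def eval_nat_numeral mult_ac)
  have "(U + V) ^ 6 * U\<^sup>2 = U ^ 8 * V ^ 0 + 6 * (U ^ 7 * V ^ 1) + 15 * (U ^ 6 * V\<^sup>2)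
      + 20 * (U ^ 5 * V ^ 3) + 15 * (U ^ 4 * V ^ 4) + 6 * (U ^ 3 * V ^ 5) + U\<^sup>2 * V ^ 6"
    "(U + V) ^ 6 * (U * V) = U ^ 7 * V ^ 1 + 6 * (U ^ 6 * V\<^sup>2) + 15 * (U ^ 5 * V ^ 3)
      + 20 * (U ^ 4 * V ^ 4) + 15 * (U ^ 3 * V ^ 5) + 6 * (U\<^sup>2 * V ^ 6) + U ^ 1 * V ^ 7"
    "(U + V) ^ 6 * V\<^sup>2 = U ^ 6 * V\<^sup>2 + 6 * (U ^ 5 * V ^ 3) + 15 * (U ^ 4 * V ^ 4)
      + 20 * (U ^ 3 * V ^ 5) + 15 * (U\<^sup>2 * V ^ 6) + 6 * (U ^ 1 * V ^ 7) + U ^ 0 * V ^ 8"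
    by algebra+
  then have "e 8 + 6 * e 7 + 15 * e 6 + 20 * e 5 + 15 * e 4 + 6 * e 3 + e 2 = 0"
    "e 7 + 6 * e 6 + 15 * e 5 + 20 * e 4 + 15 * e 3 + 6 * e 2 + e 1 = 0"
    "e 6 + 6 * e 5 + 15 * e 4 + 20 * e 3 + 15 * e 2 + 6 * e 1 + e 0 = 0"
    using grad[of "U + V" "U\<^sup>2"] grad[of "U + V" "U * V"] grad[of "U + V" "V\<^sup>2"] by (simp_all only: apolar_add apolar_numeral_mult) (simp_all add: e_def)
  then have "e 5 = 0" "e 4 = 0" "e 3 = 0" using outer by linarith+
  moreover have "k \<in> {0, 1, 2, 3, 4, 5, 6, 7, 8}" using k by auto
  ultimately show ?thesis using outer by (auto simp: e_def)
qed

lemma apolar_eq_0_if_powers_of_linear_eq_0: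
  assumes s: "s \<noteq> 0" and zero: "\<And>k. k \<le> 8 \<Longrightarrow> apolar L ([:r, s:] ^ k) = 0"
    and j: "j \<le> 8"
  shows "L j = 0"
proof -
  define U where "U = [:r, s:]"
  have "[:0, 1:] = smult (1 / s) (U + [:- r:])" using s by (simp add: U_def)
  then have "L j = (1 / s) ^ j * apolar L ((U + [:- r:]) ^ j)"
    using apolar_monom_power[OF j, of L] by (simp add: smult_power apolar_smult)
  also have "(U + [:- r:]) ^ j = (\<Sum>k\<le>j. of_nat (j choose k) * U ^ k * [:- r:] ^ (j - k))"
    by (rule binomial_ring)
  also have "apolar L \<dots> = 0"
  proof -
    have "apolar L (of_nat (j choose k) * U ^ k * [:- r:] ^ (j - k)) = 0" if "k \<le> j" for k
    proof -
      have "of_nat (j choose k) * U ^ k * [:- r:] ^ (j - k)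
          = smult (of_nat (j choose k) * (- r) ^ (j - k)) (U ^ k)"
        by (simp add: of_nat_poly poly_const_pow algebra_simps)
      then show ?thesis using zero[of k] that j by (simp add: apolar_smult U_def)
    qed
    then show ?thesis by (simp add: apolar_sum)
  qed
  finally show ?thesis by simp
qed

lemma pos_def_quadratic_sum_of_squares:
  fixes a b c :: real
  assumes "a > 0" "4 * a * c - b\<^sup>2 > 0"
  obtains r s v where "s \<noteq> 0" "v \<noteq> 0" "[:r, s:]\<^sup>2 + [:v:]\<^sup>2 = [:c, b, a:]"
proof
  define s where "s = sqrt a"
  define v where "v = sqrt ((4 * a * c - b\<^sup>2) / (4 * a))"
  have s: "s > 0" "s * s = a" using assms by (auto simp: s_def)
  have v: "v > 0" "v * v = (4 * a * c - b\<^sup>2) / (4 * a)" using assms by (auto simp: v_def)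
  show "s \<noteq> 0" "v \<noteq> 0" using s v by auto
  have "b / (2 * s) * (b / (2 * s)) = b\<^sup>2 / (4 * a)"
    using s by (simp add: field_simps power2_eq_square)
  then have "b / (2 * s) * (b / (2 * s)) + v * v = c"
    unfolding v(2) using assms(1) by (simp add: field_simps)
  moreover have "b / (2 * s) * s + s * (b / (2 * s)) = b" using s by (simp add: field_simps)
  ultimately show "[:b / (2 * s), s:]\<^sup>2 + [:v:]\<^sup>2 = [:c, b, a:]"
    using s by (simp add: power2_eq_square algebra_simps)
qed

lemma pos_definite_quadratic_coeffs:
  fixes a b c :: real
  assumes "\<forall>x y. (x, y) \<noteq> (0, 0) \<longrightarrow> a * x\<^sup>2 + b * x * y + c * y\<^sup>2 > 0"
  shows "a > 0" "4 * a * c - b\<^sup>2 > 0"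
proof -
  show a: "a > 0" using assms[rule_format, of 1 0] by simp
  have "a * (- b / (2 * a))\<^sup>2 + b * (- b / (2 * a)) * 1 + c * 1\<^sup>2 > 0"
    using assms[rule_format, of "- b / (2 * a)" 1] by simp
  then show "4 * a * c - b\<^sup>2 > 0" using a by (simp add: power2_eq_square field_simps)
qed

lemma Fpair_uminus: "Fpair L (- a) (- b) (- c) = Fpair L a b c"
proof -
  have "[:- c, - b, - a:] = - [:c, b, a:]" by simp
  then show ?thesis by (simp only: Fpair_eq_apolar power_minus_Bit0)
qed

lemma Fpair_ne_0_if_pos_definite:
  assumes dual: "dual_Sigma4_28 L" and nonzero: "nonzero_form8 L"
    and pos: "\<forall>x y. (x, y) \<noteq> (0, 0) \<longrightarrow> a * x\<^sup>2 + b * x * y + c * y\<^sup>2 > 0"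
  shows "Fpair L a b c \<noteq> 0"
proof
  assume F: "Fpair L a b c = 0"
  obtain r s v where s: "s \<noteq> 0" and v: "v \<noteq> 0" and q: "[:r, s:]\<^sup>2 + [:v:]\<^sup>2 = [:c, b, a:]"
    using pos_def_quadratic_sum_of_squares pos_definite_quadratic_coeffs[OF pos] by metis
  define U where "U = [:r, s:]"
  have U: "degree U \<le> 1" and V: "degree [:v:] \<le> 1" by (simp_all add: U_def)
  have "apolar L ((U\<^sup>2 + [:v:]\<^sup>2) ^ 4) = 0" using F q by (simp add: U_def Fpair_eq_apolar)
  note eighth = apolar_eighth_powers_eq_0[OF dual U V this]
  have "apolar L (U ^ k) = 0" if "k \<le> 8" for k
  proof -
    have "v ^ (8 - k) * apolar L (U ^ k) = apolar L (U ^ k * [:v:] ^ (8 - k))"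
      by (simp add: mult.commute[of "U ^ k"] apolar_const_power_mult)
    with apolar_mixed_monomials_eq_0[OF dual U V eighth that] v show ?thesis by simp
  qed
  then have "L j = 0" if "j \<le> 8" for j
    using apolar_eq_0_if_powers_of_linear_eq_0[where L = L and r = r, OF s _ that]
    by (simp add: U_def)
  with nonzero show False by (auto simp: nonzero_form8_def)
qed

theorem mainTheorem11:
  fixes L :: "nat \<Rightarrow> real" and a b c :: real
  assumes "dual_Sigma4_28 L"
    and "nonzero_form8 L"
    and "definite_bqf a b c"
  shows "Fpair L a b c \<noteq> 0"
  using assms(3) unfolding definite_bqf_def
proof
  assume "\<forall>x y. (x, y) \<noteq> (0, 0) \<longrightarrow> a * x\<^sup>2 + b * x * y + c * y\<^sup>2 > 0"
  then show ?thesis using Fpair_ne_0_if_pos_definite[OF assms(1,2)] by blast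
next
  assume "\<forall>x y. (x, y) \<noteq> (0, 0) \<longrightarrow> a * x\<^sup>2 + b * x * y + c * y\<^sup>2 < 0"
  then have "\<forall>x y. (x, y) \<noteq> (0, 0) \<longrightarrow> (- a) * x\<^sup>2 + (- b) * x * y + (- c) * y\<^sup>2 > 0"
    by (metis add.inverse_inverse mult_minus_left neg_0_less_iff_less minus_add_distrib)
  then show ?thesis using Fpair_ne_0_if_pos_definite[OF assms(1,2)] Fpair_uminus by metis
qed

end
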